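(* Let $G$ be a connected graph on $n\ge2$ vertices, $\alpha\in\mathbb{R}$, with vertices labeled so that, writing $s_k=({}^\alpha\mathbb{M})_k+\mathbb{D}_k$, we have $s_1\ge s_2\ge\cdots\ge s_n$. Let $S=\min_{1\le i\le n}\mathbb{D}_i$ and $T=\min_{1\le i\ne j\le n}d_{ij}\mathbb{D}_j^\alpha/\mathbb{D}_i^\alpha$. Then \[\rho(\mathbb{DQ}(G))\ge \frac{s_n+S-T+\sqrt{(s_n-S+T)^2+4T\sum_{k=1}^{n-1}(s_k-s_n)}}{2}.\] Equality holds if and only if $s_1=\cdots=s_n$, or for some $2\le t\le n$: (i) $\mathbb{D}_k=S$ for $1\le k\le t-1$; (ii) $d_{kl}\mathbb{D}_l^\alpha/\mathbb{D}_k^\alpha=T$ for all $1\le k\le n$, $1\le l\le t-1$, $k\ne l$; (iii) $s_t=\cdots=s_n$.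
   Context: $\mathbb{D}(G)=(d_{ij})$ is the distance matrix of $G$, $\mathbb{D}_i=\sum_j d_{ij}$ the transmission of $v_i$, and $\mathbb{DQ}(G)=\mathrm{diag}(\mathbb{D}_1,\dots,\mathbb{D}_n)+\mathbb{D}(G)$ the distance signless Laplacian matrix. $({}^\alpha\mathbb{M})_i=\frac{\sum_{j=1}^n d_{ij}\mathbb{D}_j^\alpha}{\mathbb{D}_i^\alpha}$ is the generalized average transmission. $\rho$ is the spectral radius. *)

theory Defs
  imports Complex_Main "Jordan_Normal_Form.Spectral_Radius"
begin

text \<open>A simple graph on the vertex set {0..<n}, given by a symmetric irreflexive
  adjacency relation E (only its restriction to {0..<n} matters).\<close>

definition simple_graph :: "nat \<Rightarrow> (nat \<Rightarrow> nat \<Rightarrow> bool) \<Rightarrow> bool" where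
  "simple_graph n E \<longleftrightarrow> (\<forall>i<n. \<forall>j<n. E i j \<longleftrightarrow> E j i) \<and> (\<forall>i<n. \<not> E i i)"

definition is_walk :: "nat \<Rightarrow> (nat \<Rightarrow> nat \<Rightarrow> bool) \<Rightarrow> nat list \<Rightarrow> bool" where
  "is_walk n E p \<longleftrightarrow> p \<noteq> [] \<and> set p \<subseteq> {0..<n} \<and>
     (\<forall>k. Suc k < length p \<longrightarrow> E (p ! k) (p ! Suc k))"

definition connected_graph :: "nat \<Rightarrow> (nat \<Rightarrow> nat \<Rightarrow> bool) \<Rightarrow> bool" where
  "connected_graph n E \<longleftrightarrow> (\<forall>i<n. \<forall>j<n. \<exists>p. is_walk n E p \<and> hd p = i \<and> last p = j)"

definition gdist :: "nat \<Rightarrow> (nat \<Rightarrow> nat \<Rightarrow> bool) \<Rightarrow> nat \<Rightarrow> nat \<Rightarrow> nat" where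
  "gdist n E i j = (LEAST k. \<exists>p. is_walk n E p \<and> hd p = i \<and> last p = j \<and> length p = Suc k)"

definition transmission :: "nat \<Rightarrow> (nat \<Rightarrow> nat \<Rightarrow> bool) \<Rightarrow> nat \<Rightarrow> real" where
  "transmission n E i = (\<Sum>j<n. real (gdist n E i j))"

definition DQ_mat :: "nat \<Rightarrow> (nat \<Rightarrow> nat \<Rightarrow> bool) \<Rightarrow> real mat" where
  "DQ_mat n E = mat n n (\<lambda>(i,j). (if i = j then transmission n E i else 0) + real (gdist n E i j))"

definition gen_avg_trans :: "nat \<Rightarrow> (nat \<Rightarrow> nat \<Rightarrow> bool) \<Rightarrow> real \<Rightarrow> nat \<Rightarrow> real" where
  "gen_avg_trans n E \<alpha> i =
     (\<Sum>j<n. real (gdist n E i j) * transmission n E j powr \<alpha>) / transmission n E i powr \<alpha>"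

definition rho :: "real mat \<Rightarrow> real" where
  "rho A = spectral_radius (map_mat complex_of_real A)"

end

theory Submission
  imports Defs
begin

(*
  Conjugating DQ(G) by the diagonal matrix Tr^\<alpha> gives a positive matrix B with entries
  b_kk = D_k and b_kl = d_kl D_l^\<alpha> / D_k^\<alpha>, whose row sums are the s_k. Let \<mu> be the right-hand
  side of the bound; it is the larger root of (\<mu> - s_n)(\<mu> - S + T) = T \<Sum>_k (s_k - s_n). For
  the weights w_k = (s_k - s_n) / (\<mu> - S + T) \<ge> 0 this choice gives
  B (1 + w) = \<mu> (1 + w) + \<delta>, where \<delta>_k = \<Sum>_l (b_kl - S or T) w_l \<ge> 0.
  For a positive matrix, a positive vector y with B y \<ge> \<mu> y forces \<rho> \<ge> \<mu>, with equality iff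
  B y = \<mu> y. So equality holds iff every column l with s_l \<noteq> s_n equals S on the diagonal
  and T elsewhere; as s is nonincreasing, these columns form an initial segment.
*)

section \<open>Positive super-eigenvectors of nonnegative matrices\<close>

lemma mult_mat_vec_nth:
  assumes "A \<in> carrier_mat m n" "u \<in> carrier_vec n" "i < m"
  shows "(A *\<^sub>v u) $ i = (\<Sum>j<n. A $$ (i,j) * u $ j)"
  using assms by (auto simp: scalar_prod_def lessThan_atLeast0 intro!: sum.cong)

lemma mat_pow_mult_vec_ge:
  fixes B :: "real mat"
  assumes B: "B \<in> carrier_mat n n" and B_nonneg: "\<forall>i<n. \<forall>j<n. 0 \<le> B $$ (i,j)"
    and g: "0 \<le> g" and super: "\<forall>i<n. g * y i \<le> (\<Sum>j<n. B $$ (i,j) * y j)"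
    and u: "u \<in> carrier_vec n" and \<beta>: "0 \<le> \<beta>" and u_ge: "\<forall>i<n. \<beta> * y i \<le> u $ i"
    and i: "i < n"
  shows "\<beta> * g ^ k * y i \<le> (B ^\<^sub>m k *\<^sub>v u) $ i"
  using u \<beta> u_ge i
proof (induction k arbitrary: u \<beta> i)
  case 0
  then show ?case using B by simp
next
  case (Suc k)
  have Bu: "B *\<^sub>v u \<in> carrier_vec n" using B Suc.prems(1) by simp
  have "(\<beta> * g) * y j \<le> (B *\<^sub>v u) $ j" if j: "j < n" for j
  proof -
    have "(\<beta> * g) * y j \<le> \<beta> * (\<Sum>l<n. B $$ (j,l) * y l)"
      using super j Suc.prems(2) by (simp add: mult.assoc mult_left_mono)
    also have "\<dots> = (\<Sum>l<n. B $$ (j,l) * (\<beta> * y l))"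
      by (simp add: sum_distrib_left mult_ac)
    also have "\<dots> \<le> (\<Sum>l<n. B $$ (j,l) * u $ l)"
      using B_nonneg Suc.prems(3) j by (intro sum_mono mult_left_mono) auto
    also have "\<dots> = (B *\<^sub>v u) $ j" using mult_mat_vec_nth[OF B Suc.prems(1) j] by simp
    finally show ?thesis .
  qed
  then have "(\<beta> * g) * g ^ k * y i \<le> (B ^\<^sub>m k *\<^sub>v (B *\<^sub>v u)) $ i"
    using Suc.IH[OF Bu] Suc.prems(2,4) g by simp
  moreover have "B ^\<^sub>m Suc k *\<^sub>v u = B ^\<^sub>m k *\<^sub>v (B *\<^sub>v u)"
    using B Suc.prems(1) by (simp add: assoc_mult_mat_vec[of _ n n _ n])
  ultimately show ?case by (simp add: mult_ac)
qed

lemma spectral_radius_nonneg: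
  assumes "A \<in> carrier_mat n n" "0 < n"
  shows "0 \<le> spectral_radius A"
  using spectral_radius_mem_max(1)[OF assms] by auto

lemma spectral_radius_smult_le:
  assumes A: "A \<in> carrier_mat n n" and n: "0 < n" and c: "0 < c"
  shows "spectral_radius (complex_of_real c \<cdot>\<^sub>m A) \<le> c * spectral_radius A"
proof -
  have cA: "complex_of_real c \<cdot>\<^sub>m A \<in> carrier_mat n n" using A by simp
  obtain ev where "ev \<in> spectrum (complex_of_real c \<cdot>\<^sub>m A)"
    and radius: "spectral_radius (complex_of_real c \<cdot>\<^sub>m A) = norm ev"
    using spectral_radius_mem_max(1)[OF cA n] by auto
  then obtain v where "eigenvector (complex_of_real c \<cdot>\<^sub>m A) v ev"
    unfolding spectrum_def eigenvalue_def by auto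
  then have v: "v \<in> carrier_vec n" "v \<noteq> 0\<^sub>v n" "(complex_of_real c \<cdot>\<^sub>m A) *\<^sub>v v = ev \<cdot>\<^sub>v v"
    using cA unfolding eigenvector_def by auto
  have "A *\<^sub>v v = (ev / complex_of_real c) \<cdot>\<^sub>v v"
  proof (rule eq_vecI)
    fix i assume "i < dim_vec ((ev / complex_of_real c) \<cdot>\<^sub>v v)"
    then have i: "i < n" using v by simp
    have "complex_of_real c * (A *\<^sub>v v) $ i = ev * v $ i"
      using arg_cong[OF v(3), of "\<lambda>x. x $ i"] A v(1) i by simp
    then show "(A *\<^sub>v v) $ i = ((ev / complex_of_real c) \<cdot>\<^sub>v v) $ i"
      using c i v(1) by (simp add: field_simps)
  qed (use A v in simp)
  then have "ev / complex_of_real c \<in> spectrum A"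
    using A v unfolding spectrum_def eigenvalue_def eigenvector_def by auto
  then have "norm (ev / complex_of_real c) \<le> spectral_radius A"
    using spectral_radius_mem_max(2)[OF A n] by blast
  then have "norm ev / c \<le> spectral_radius A" using c by (simp add: norm_divide)
  then show ?thesis using radius c by (simp add: divide_le_eq mult.commute)
qed

lemma mat_pow_entries_bounded:
  fixes P :: "real mat"
  assumes P: "P \<in> carrier_mat n n"
    and radius: "spectral_radius (map_mat complex_of_real P) < 1"
  obtains C where "\<And>k i j. i < n \<Longrightarrow> j < n \<Longrightarrow> \<bar>(P ^\<^sub>m k) $$ (i,j)\<bar> \<le> C"
proof -
  have "map_mat complex_of_real P \<in> carrier_mat n n" using P by simp
  from spectral_radius_jnf_norm_bound_less_1_upper_triangular[OF this radius]
  obtain C where C: "\<And>k. norm_bound (map_mat complex_of_real P ^\<^sub>m k) C" by auto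
  have "\<bar>(P ^\<^sub>m k) $$ (i,j)\<bar> \<le> C" if "i < n" "j < n" for k i j
  proof -
    have "map_mat complex_of_real P ^\<^sub>m k = map_mat complex_of_real (P ^\<^sub>m k)"
      by (rule of_real_hom.mat_hom_pow[OF P, symmetric])
    with C[of k] that P show ?thesis unfolding norm_bound_def by auto
  qed
  then show ?thesis using that by blast
qed

(* If \<rho>(P) < 1, the powers of P stay bounded (Jordan normal form), yet along y they grow
   like g^k. *)
lemma spectral_radius_ge_1_of_supereigenvector:
  fixes P :: "real mat"
  assumes P: "P \<in> carrier_mat n n" and n: "0 < n"
    and P_nonneg: "\<forall>i<n. \<forall>j<n. 0 \<le> P $$ (i,j)" and y_pos: "\<forall>i<n. 0 < y i"
    and g: "1 < g" and super: "\<forall>i<n. g * y i \<le> (\<Sum>j<n. P $$ (i,j) * y j)"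
  shows "1 \<le> spectral_radius (map_mat complex_of_real P)"
proof (rule ccontr)
  assume "\<not> 1 \<le> spectral_radius (map_mat complex_of_real P)"
  then obtain C where C: "\<And>k i j. i < n \<Longrightarrow> j < n \<Longrightarrow> \<bar>(P ^\<^sub>m k) $$ (i,j)\<bar> \<le> C"
    using mat_pow_entries_bounded[OF P] by (meson not_le)
  define Y where "Y = (\<Sum>j<n. y j)"
  obtain k where k: "C * Y / y 0 < g ^ k" using real_arch_pow[OF g] by blast
  have "1 * g ^ k * y 0 \<le> (P ^\<^sub>m k *\<^sub>v vec n y) $ 0"
    using g n y_pos by (intro mat_pow_mult_vec_ge[OF P P_nonneg _ super]) auto
  also have "\<dots> = (\<Sum>j<n. (P ^\<^sub>m k) $$ (0,j) * y j)"
    using mult_mat_vec_nth[OF pow_carrier_mat[OF P] _ n, of "vec n y"] by simp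
  also have "\<dots> \<le> (\<Sum>j<n. C * y j)"
  proof (intro sum_mono mult_right_mono)
    fix j assume "j \<in> {..<n}"
    then show "(P ^\<^sub>m k) $$ (0,j) \<le> C" "0 \<le> y j"
      using C[OF n, of j k] y_pos by auto
  qed
  also have "\<dots> = C * Y" by (simp add: Y_def sum_distrib_left)
  finally have "g ^ k \<le> C * Y / y 0" using y_pos n by (simp add: le_divide_eq)
  with k show False by simp
qed

lemma spectral_radius_ge_of_supereigenvector:
  fixes Q :: "real mat"
  assumes Q: "Q \<in> carrier_mat n n" and n: "0 < n"
    and Q_nonneg: "\<forall>i<n. \<forall>j<n. 0 \<le> Q $$ (i,j)" and y_pos: "\<forall>i<n. 0 < y i"
    and super: "\<forall>i<n. c * y i \<le> (\<Sum>j<n. Q $$ (i,j) * y j)"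
  shows "c \<le> spectral_radius (map_mat complex_of_real Q)"
proof (rule ccontr)
  let ?A = "map_mat complex_of_real Q"
  assume "\<not> c \<le> spectral_radius ?A"
  moreover have "0 \<le> spectral_radius ?A" using spectral_radius_nonneg Q n by simp
  ultimately obtain r where r: "0 < r" "spectral_radius ?A < r" "r < c"
    by (intro that[of "(spectral_radius ?A + c) / 2"]) auto
  define P where "P = (1 / r) \<cdot>\<^sub>m Q"
  have P: "P \<in> carrier_mat n n" using Q by (simp add: P_def)
  have P_nonneg: "\<forall>i<n. \<forall>j<n. 0 \<le> P $$ (i,j)" using Q_nonneg Q r by (simp add: P_def)
  have P_super: "\<forall>i<n. c / r * y i \<le> (\<Sum>j<n. P $$ (i,j) * y j)"
  proof (intro allI impI)
    fix i assume i: "i < n"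
    have "(\<Sum>j<n. P $$ (i,j) * y j) = (\<Sum>j<n. Q $$ (i,j) * y j) / r"
      unfolding sum_divide_distrib using Q i by (intro sum.cong) (auto simp: P_def)
    then show "c / r * y i \<le> (\<Sum>j<n. P $$ (i,j) * y j)"
      using super i r by (simp add: divide_right_mono)
  qed
  have "1 \<le> spectral_radius (map_mat complex_of_real P)"
    using r by (intro spectral_radius_ge_1_of_supereigenvector[OF P n P_nonneg y_pos _ P_super]) simp
  also have "map_mat complex_of_real P = complex_of_real (1 / r) \<cdot>\<^sub>m ?A"
    by (rule eq_matI) (auto simp: P_def)
  also have "spectral_radius \<dots> \<le> 1 / r * spectral_radius ?A"
    using spectral_radius_smult_le[of ?A n "1 / r"] Q n r by simp
  also have "\<dots> < 1" using r by (simp add: divide_less_eq)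
  finally show False by simp
qed

(* Compare an eigenvector v of maximal modulus eigenvalue with y at an index maximising
   |v_i| / y_i. *)
lemma spectral_radius_le_of_subeigenvector:
  fixes Q :: "real mat"
  assumes Q: "Q \<in> carrier_mat n n" and n: "0 < n"
    and Q_nonneg: "\<forall>i<n. \<forall>j<n. 0 \<le> Q $$ (i,j)" and y_pos: "\<forall>i<n. 0 < y i"
    and sub: "\<forall>i<n. (\<Sum>j<n. Q $$ (i,j) * y j) \<le> \<mu> * y i"
  shows "spectral_radius (map_mat complex_of_real Q) \<le> \<mu>"
proof -
  let ?A = "map_mat complex_of_real Q"
  have A: "?A \<in> carrier_mat n n" using Q by simp
  obtain ev where "ev \<in> spectrum ?A" and radius: "spectral_radius ?A = norm ev"
    using spectral_radius_mem_max(1)[OF A n] by auto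
  then obtain v where "eigenvector ?A v ev" unfolding spectrum_def eigenvalue_def by auto
  then have v: "v \<in> carrier_vec n" "v \<noteq> 0\<^sub>v n" "?A *\<^sub>v v = ev \<cdot>\<^sub>v v"
    using A unfolding eigenvector_def by auto
  have eigen_eq: "ev * v $ i = (\<Sum>j<n. complex_of_real (Q $$ (i,j)) * v $ j)" if i: "i < n" for i
    using arg_cong[OF v(3), of "\<lambda>x. x $ i"] mult_mat_vec_nth[OF A v(1) i] Q v(1) i by simp
  define f where "f i = norm (v $ i) / y i" for i
  define M where "M = Max (f ` {..<n})"
  have "M \<in> f ` {..<n}" unfolding M_def using n by (intro Max_in) auto
  then obtain i0 where i0: "i0 < n" "f i0 = M" by auto
  have f_le: "f j \<le> M" if "j < n" for j unfolding M_def using that by (intro Max_ge) auto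
  obtain j0 where j0: "j0 < n" "v $ j0 \<noteq> 0"
    using v(1,2) by (metis eq_vecI carrier_vecD index_zero_vec)
  have "0 < f j0" unfolding f_def using j0 y_pos by simp
  then have M_pos: "0 < M" using f_le[OF j0(1)] by linarith
  have v_i0: "norm (v $ i0) = M * y i0"
    using i0 y_pos unfolding f_def by (metis divide_eq_eq less_irrefl)
  have "norm ev * norm (v $ i0) = norm (\<Sum>j<n. complex_of_real (Q $$ (i0,j)) * v $ j)"
    by (simp add: eigen_eq[OF i0(1), symmetric] norm_mult)
  also have "\<dots> \<le> (\<Sum>j<n. norm (complex_of_real (Q $$ (i0,j)) * v $ j))"
    by (rule norm_sum)
  also have "\<dots> \<le> (\<Sum>j<n. Q $$ (i0,j) * (M * y j))"
  proof (rule sum_mono)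
    fix j assume "j \<in> {..<n}"
    then have "norm (v $ j) \<le> M * y j" and "0 \<le> Q $$ (i0,j)"
      using f_le[of j] y_pos Q_nonneg i0(1) by (auto simp: f_def divide_le_eq)
    then show "norm (complex_of_real (Q $$ (i0,j)) * v $ j) \<le> Q $$ (i0,j) * (M * y j)"
      by (simp add: norm_mult mult_left_mono)
  qed
  also have "\<dots> = M * (\<Sum>j<n. Q $$ (i0,j) * y j)" by (simp add: sum_distrib_left mult_ac)
  also have "\<dots> \<le> M * (\<mu> * y i0)" using sub i0(1) M_pos by (simp add: mult_left_mono)
  finally have "norm ev * (M * y i0) \<le> \<mu> * (M * y i0)" unfolding v_i0 by (simp add: mult_ac)
  moreover have "0 < M * y i0" using M_pos y_pos i0(1) by simp
  ultimately show ?thesis using radius by (simp add: mult_le_cancel_right_pos)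
qed

(* Since Q is positive, Q y is a super-eigenvector that is strict at every index, so some
   \<mu>' > \<mu> still satisfies Q (Q y) \<ge> \<mu>' Q y. *)
lemma spectral_radius_gt_of_supereigenvector:
  fixes Q :: "real mat"
  assumes Q: "Q \<in> carrier_mat n n" and n: "0 < n"
    and Q_pos: "\<forall>i<n. \<forall>j<n. 0 < Q $$ (i,j)" and y_pos: "\<forall>i<n. 0 < y i"
    and super: "\<forall>i<n. \<mu> * y i \<le> (\<Sum>j<n. Q $$ (i,j) * y j)"
    and i0: "i0 < n" and strict: "\<mu> * y i0 < (\<Sum>j<n. Q $$ (i0,j) * y j)"
  shows "\<mu> < spectral_radius (map_mat complex_of_real Q)"
proof -
  define y' where "y' i = (\<Sum>j<n. Q $$ (i,j) * y j)" for i
  have y'_pos: "\<forall>i<n. 0 < y' i"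
    unfolding y'_def using n Q_pos y_pos by (auto intro!: sum_pos)
  have y'_strict: "\<mu> * y' i < (\<Sum>j<n. Q $$ (i,j) * y' j)" if i: "i < n" for i
  proof -
    have "0 < (\<Sum>j<n. Q $$ (i,j) * (y' j - \<mu> * y j))"
    proof (rule sum_pos2)
      show "i0 \<in> {..<n}" using i0 by simp
      show "0 < Q $$ (i,i0) * (y' i0 - \<mu> * y i0)" using Q_pos i i0 strict by (simp add: y'_def)
      fix j assume "j \<in> {..<n}"
      then show "0 \<le> Q $$ (i,j) * (y' j - \<mu> * y j)"
        using Q_pos super i by (simp add: y'_def less_imp_le)
    qed simp
    also have "\<dots> = (\<Sum>j<n. Q $$ (i,j) * y' j) - \<mu> * y' i"
      by (simp add: y'_def right_diff_distrib sum_subtractf sum_distrib_left mult_ac)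
    finally show ?thesis by simp
  qed
  define ratio where "ratio i = (\<Sum>j<n. Q $$ (i,j) * y' j) / y' i" for i
  define \<mu>' where "\<mu>' = Min (ratio ` {..<n})"
  have "\<mu> < ratio i" if "i < n" for i
    using y'_pos y'_strict[OF that] that by (simp add: ratio_def less_divide_eq)
  then have "\<mu> < \<mu>'" unfolding \<mu>'_def using n by (subst Min_gr_iff) auto
  also have "\<mu>' \<le> spectral_radius (map_mat complex_of_real Q)"
  proof (rule spectral_radius_ge_of_supereigenvector[OF Q n _ y'_pos])
    show "\<forall>i<n. \<forall>j<n. 0 \<le> Q $$ (i,j)" using Q_pos by (simp add: less_imp_le)
    have "\<mu>' \<le> ratio i" if "i < n" for i unfolding \<mu>'_def using that by simp
    then show "\<forall>i<n. \<mu>' * y' i \<le> (\<Sum>j<n. Q $$ (i,j) * y' j)"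
      using y'_pos by (simp add: ratio_def le_divide_eq)
  qed
  finally show ?thesis .
qed

lemma spectral_radius_eq_iff_defect_zero:
  fixes Q :: "real mat"
  assumes Q: "Q \<in> carrier_mat n n" and n: "0 < n"
    and Q_pos: "\<forall>i<n. \<forall>j<n. 0 < Q $$ (i,j)" and y_pos: "\<forall>i<n. 0 < y i"
    and e_nonneg: "\<forall>i<n. 0 \<le> e i"
    and eq: "\<forall>i<n. (\<Sum>j<n. Q $$ (i,j) * y j) = \<mu> * y i + e i"
  shows "\<mu> \<le> spectral_radius (map_mat complex_of_real Q)"
    and "spectral_radius (map_mat complex_of_real Q) = \<mu> \<longleftrightarrow> (\<forall>i<n. e i = 0)"
proof -
  have Q_nonneg: "\<forall>i<n. \<forall>j<n. 0 \<le> Q $$ (i,j)" using Q_pos by (simp add: less_imp_le)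
  have super: "\<forall>i<n. \<mu> * y i \<le> (\<Sum>j<n. Q $$ (i,j) * y j)" using eq e_nonneg by simp
  show lower: "\<mu> \<le> spectral_radius (map_mat complex_of_real Q)"
    by (rule spectral_radius_ge_of_supereigenvector[OF Q n Q_nonneg y_pos super])
  show "spectral_radius (map_mat complex_of_real Q) = \<mu> \<longleftrightarrow> (\<forall>i<n. e i = 0)"
  proof
    assume radius: "spectral_radius (map_mat complex_of_real Q) = \<mu>"
    show "\<forall>i<n. e i = 0"
    proof (rule ccontr)
      assume "\<not> (\<forall>i<n. e i = 0)"
      then obtain i0 where i0: "i0 < n" "0 < e i0" using e_nonneg by (auto simp: less_le)
      then have "\<mu> * y i0 < (\<Sum>j<n. Q $$ (i0,j) * y j)" using eq by simp
      from spectral_radius_gt_of_supereigenvector[OF Q n Q_pos y_pos super i0(1) this] radius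
      show False by simp
    qed
  next
    assume "\<forall>i<n. e i = 0"
    then have "spectral_radius (map_mat complex_of_real Q) \<le> \<mu>"
      using eq by (intro spectral_radius_le_of_subeigenvector[OF Q n Q_nonneg y_pos]) simp
    with lower show "spectral_radius (map_mat complex_of_real Q) = \<mu>" by simp
  qed
qed

section \<open>Shifted row sums\<close>

lemma larger_root_quadratic:
  fixes \<sigma> S T N :: real
  assumes T: "0 \<le> T" and N: "0 \<le> N" and gap: "0 < \<sigma> - S + T"
  defines "\<mu> \<equiv> (\<sigma> + S - T + sqrt ((\<sigma> - S + T)\<^sup>2 + 4 * T * N)) / 2"
  shows "0 < \<mu> - S + T" and "(\<mu> - \<sigma>) * (\<mu> - S + T) = T * N"
proof -
  define R where "R = sqrt ((\<sigma> - S + T)\<^sup>2 + 4 * T * N)"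
  have R: "0 \<le> R" "R\<^sup>2 = (\<sigma> - S + T)\<^sup>2 + 4 * T * N"
    using T N by (simp_all add: R_def)
  have "\<mu> - S + T = (\<sigma> - S + T + R) / 2"
    unfolding \<mu>_def R_def[symmetric] by (simp add: field_simps)
  then show "0 < \<mu> - S + T" using gap R(1) by simp
  have "(\<mu> - \<sigma>) * (\<mu> - S + T) = (R\<^sup>2 - (\<sigma> - S + T)\<^sup>2) / 4"
    unfolding \<mu>_def R_def[symmetric] by (simp add: power2_eq_square field_simps)
  then show "(\<mu> - \<sigma>) * (\<mu> - S + T) = T * N" using R(2) by simp
qed

(* When r_i \<ge> S and r_j \<ge> T for j \<noteq> i, the last sum is a nonnegative defect; the balance
   condition on \<mu> is exactly what makes all other terms cancel. *)
lemma row_sum_shifted_weights: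
  fixes r :: "nat \<Rightarrow> real"
  assumes row: "s i = (\<Sum>j<n. r j)" and i: "i < n"
    and c: "\<mu> - S + T \<noteq> 0"
    and weights: "\<And>j. (\<mu> - S + T) * w j = s j - \<sigma>"
    and balance: "(\<mu> - \<sigma>) * (\<mu> - S + T) = T * (\<Sum>j<n. s j - \<sigma>)"
  shows "(\<Sum>j<n. r j * (1 + w j))
           = \<mu> * (1 + w i) + (\<Sum>j<n. (r j - (if j = i then S else T)) * w j)"
proof -
  let ?m = "\<lambda>j. if j = i then S else T"
  have "(\<mu> - \<sigma>) * (\<mu> - S + T) = (T * (\<Sum>j<n. w j)) * (\<mu> - S + T)"
    unfolding balance by (simp add: sum_distrib_left weights[symmetric] mult_ac)
  then have total: "T * (\<Sum>j<n. w j) = \<mu> - \<sigma>" using c by simp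
  have "(\<Sum>j<n. ?m j * w j) = (\<Sum>j<n. T * w j + (if j = i then (S - T) * w j else 0))"
    by (intro sum.cong) (auto simp: algebra_simps)
  also have "\<dots> = T * (\<Sum>j<n. w j) + (S - T) * w i"
    using i by (simp add: sum.distrib sum_distrib_left)
  finally have split: "(\<Sum>j<n. ?m j * w j) = \<mu> - \<sigma> + (S - T) * w i" using total by simp
  have "(\<Sum>j<n. r j * (1 + w j)) = (\<Sum>j<n. r j + ?m j * w j + (r j - ?m j) * w j)"
    by (intro sum.cong) (simp_all add: algebra_simps)
  also have "\<dots> = s i + (\<Sum>j<n. ?m j * w j) + (\<Sum>j<n. (r j - ?m j) * w j)"
    by (simp add: row sum.distrib)
  ultimately show ?thesis
    using split weights[of i] by (simp only: left_diff_distrib distrib_left distrib_right mult_1_right)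
qed

lemma defect_zero_iff:
  fixes b :: "nat \<Rightarrow> nat \<Rightarrow> real"
  assumes lower: "\<And>i j. i < n \<Longrightarrow> j < n \<Longrightarrow> m i j \<le> b i j"
    and w_nonneg: "\<And>j. j < n \<Longrightarrow> 0 \<le> w j"
  shows "(\<forall>i<n. (\<Sum>j<n. (b i j - m i j) * w j) = 0) \<longleftrightarrow>
         (\<forall>j<n. w j \<noteq> 0 \<longrightarrow> (\<forall>i<n. b i j = m i j))"
proof -
  have "(\<Sum>j<n. (b i j - m i j) * w j) = 0 \<longleftrightarrow> (\<forall>j<n. (b i j - m i j) * w j = 0)" if "i < n" for i
    using lower[OF that] w_nonneg by (subst sum_nonneg_eq_0_iff) auto
  then show ?thesis by auto
qed

lemma nonincreasing_prefix_iff: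
  fixes s :: "nat \<Rightarrow> 'a::linorder"
  assumes sorted: "\<And>i j. i \<le> j \<Longrightarrow> j < n \<Longrightarrow> s j \<le> s i" and n: "0 < n"
  shows "(\<forall>j<n. s j \<noteq> s (n-1) \<longrightarrow> P j) \<longleftrightarrow>
         (\<forall>k<n. s k = s 0) \<or>
         (\<exists>t. 2 \<le> t \<and> t \<le> n \<and> (\<forall>k<t-1. P k) \<and> (\<forall>k. t-1 \<le> k \<and> k < n \<longrightarrow> s k = s (n-1)))"
    (is "?above \<longleftrightarrow> ?const \<or> ?prefix")
proof
  assume above: ?above
  show "?const \<or> ?prefix"
  proof (cases "s 0 = s (n-1)")
    case True
    have ?const
    proof (intro allI impI)
      fix k assume "k < n"
      then have "s k \<le> s 0" "s (n-1) \<le> s k" using sorted[of 0 k] sorted[of k "n-1"] by auto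
      with True show "s k = s 0" by simp
    qed
    then show ?thesis ..
  next
    case False
    define m where "m = (LEAST k. s k = s (n-1))"
    have m: "s m = s (n-1)" "m \<le> n - 1" unfolding m_def by (auto intro: LeastI Least_le)
    have "m \<noteq> 0"
    proof
      assume "m = 0"
      with m(1) False show False by simp
    qed
    then have t: "2 \<le> Suc m" "Suc m \<le> n" using m(2) n by auto
    have prefix: "\<forall>k<m. P k"
    proof (intro allI impI)
      fix k assume k: "k < m"
      then have "s k \<noteq> s (n-1)" unfolding m_def by (rule not_less_Least)
      moreover have "k < n" using k m(2) n by linarith
      ultimately show "P k" using above by blast
    qed
    have tail: "\<forall>k. m \<le> k \<and> k < n \<longrightarrow> s k = s (n-1)"
    proof (intro allI impI)
      fix k assume k: "m \<le> k \<and> k < n"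
      then have "s k \<le> s m" "s (n-1) \<le> s k" using sorted[of m k] sorted[of k "n-1"] by auto
      with m(1) show "s k = s (n-1)" by simp
    qed
    show ?thesis
      using t prefix tail by (intro disjI2 exI[of _ "Suc m"] conjI) (simp_all only: diff_Suc_1)
  qed
next
  assume "?const \<or> ?prefix"
  then show ?above
  proof
    assume ?const
    then show ?above using n by (metis diff_less less_one)
  next
    assume ?prefix
    then show ?above by (meson not_less)
  qed
qed

lemma shifted_row_sums_defect:
  fixes b :: "nat \<Rightarrow> nat \<Rightarrow> real" and s :: "nat \<Rightarrow> real"
  assumes n: "0 < n"
    and rows: "\<And>i. i < n \<Longrightarrow> s i = (\<Sum>j<n. b i j)"
    and sorted: "\<And>i j. i \<le> j \<Longrightarrow> j < n \<Longrightarrow> s j \<le> s i"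
    and lower: "\<And>i j. i < n \<Longrightarrow> j < n \<Longrightarrow> (if j = i then S else T) \<le> b i j"
    and T_pos: "0 < T"
    and \<mu>_def: "\<mu> = (s (n-1) + S - T + sqrt ((s (n-1) - S + T)\<^sup>2 + 4 * T * (\<Sum>k<n-1. s k - s (n-1)))) / 2"
    and w_def: "\<And>j. w j = (s j - s (n-1)) / (\<mu> - S + T)"
  shows "0 < \<mu> - S + T" and "\<And>j. j < n \<Longrightarrow> 0 \<le> w j"
    and "\<And>i. i < n \<Longrightarrow> (\<Sum>j<n. b i j * (1 + w j))
           = \<mu> * (1 + w i) + (\<Sum>j<n. (b i j - (if j = i then S else T)) * w j)"
proof -
  define \<sigma> where "\<sigma> = s (n-1)"
  have s_ge: "\<sigma> \<le> s j" if "j < n" for j using sorted[of j "n-1"] that by (simp add: \<sigma>_def)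
  have "b (n-1) (n-1) \<le> (\<Sum>j<n. b (n-1) j)"
  proof (rule member_le_sum)
    fix j assume "j \<in> {..<n} - {n-1}"
    then have "T \<le> b (n-1) j" using lower[of "n-1" j] n by auto
    then show "0 \<le> b (n-1) j" using T_pos by linarith
  qed (use n in auto)
  moreover have "\<sigma> = (\<Sum>j<n. b (n-1) j)" unfolding \<sigma>_def by (rule rows) (use n in simp)
  moreover have "S \<le> b (n-1) (n-1)" using lower[of "n-1" "n-1"] n by simp
  ultimately have gap: "0 < \<sigma> - S + T" using T_pos by linarith
  have N: "0 \<le> (\<Sum>k<n-1. s k - \<sigma>)" using s_ge by (intro sum_nonneg) auto
  have \<mu>_eq: "\<mu> = (\<sigma> + S - T + sqrt ((\<sigma> - S + T)\<^sup>2 + 4 * T * (\<Sum>k<n-1. s k - \<sigma>))) / 2"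
    unfolding \<mu>_def \<sigma>_def ..
  note root = larger_root_quadratic[OF less_imp_le[OF T_pos] N gap, folded \<mu>_eq]
  show c: "0 < \<mu> - S + T" by (rule root(1))
  obtain m where m: "n = Suc m" using n by (cases n) auto
  have "(\<Sum>j<n. s j - \<sigma>) = (\<Sum>k<n-1. s k - \<sigma>)" unfolding m \<sigma>_def by simp
  then have balance: "(\<mu> - \<sigma>) * (\<mu> - S + T) = T * (\<Sum>j<n. s j - \<sigma>)"
    using root(2) by simp
  have weights: "(\<mu> - S + T) * w j = s j - \<sigma>" for j using c by (simp add: w_def \<sigma>_def)
  show "0 \<le> w j" if "j < n" for j using s_ge[OF that] c by (simp add: w_def \<sigma>_def)
  show "(\<Sum>j<n. b i j * (1 + w j))
          = \<mu> * (1 + w i) + (\<Sum>j<n. (b i j - (if j = i then S else T)) * w j)" if i: "i < n" for i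
    using row_sum_shifted_weights[where r = "b i", OF rows[OF i] i _ weights balance] c by simp
qed

lemma defect_zero_iff_prefix:
  fixes d s w :: "nat \<Rightarrow> real" and f :: "nat \<Rightarrow> nat \<Rightarrow> real"
  assumes n: "0 < n" and sorted: "\<And>i j. i \<le> j \<Longrightarrow> j < n \<Longrightarrow> s j \<le> s i"
    and S: "\<And>i. i < n \<Longrightarrow> S \<le> d i"
    and T: "\<And>i j. i < n \<Longrightarrow> j < n \<Longrightarrow> i \<noteq> j \<Longrightarrow> T \<le> f i j"
    and w_nonneg: "\<And>j. j < n \<Longrightarrow> 0 \<le> w j" and w_zero: "\<And>j. w j = 0 \<longleftrightarrow> s j = s (n-1)"
  shows "(\<forall>i<n. (\<Sum>j<n. ((if i = j then d i else f i j) - (if j = i then S else T)) * w j) = 0) \<longleftrightarrow>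
         (\<forall>k<n. s k = s 0) \<or>
         (\<exists>t. 2 \<le> t \<and> t \<le> n \<and> (\<forall>k<t-1. d k = S) \<and>
            (\<forall>k<n. \<forall>l<t-1. k \<noteq> l \<longrightarrow> f k l = T) \<and>
            (\<forall>k. t-1 \<le> k \<and> k < n \<longrightarrow> s k = s (n-1)))"
proof -
  define b where "b i j = (if i = j then d i else f i j)" for i j
  have column: "(\<forall>i<n. b i j = (if j = i then S else T)) \<longleftrightarrow>
                  d j = S \<and> (\<forall>k<n. k \<noteq> j \<longrightarrow> f k j = T)" if j: "j < n" for j
  proof
    assume column: "\<forall>i<n. b i j = (if j = i then S else T)"
    have "d j = S" using column[rule_format, OF j] by (simp add: b_def)
    moreover have "f k j = T" if "k < n" "k \<noteq> j" for k
      using column[rule_format, OF that(1)] that(2) by (simp add: b_def)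
    ultimately show "d j = S \<and> (\<forall>k<n. k \<noteq> j \<longrightarrow> f k j = T)" by blast
  qed (auto simp: b_def)
  have prefix: "(\<forall>l<t-1. d l = S \<and> (\<forall>k<n. k \<noteq> l \<longrightarrow> f k l = T)) \<longleftrightarrow>
                (\<forall>k<t-1. d k = S) \<and> (\<forall>k<n. \<forall>l<t-1. k \<noteq> l \<longrightarrow> f k l = T)" for t
    by blast
  have "(\<forall>i<n. (\<Sum>j<n. (b i j - (if j = i then S else T)) * w j) = 0) \<longleftrightarrow>
        (\<forall>j<n. w j \<noteq> 0 \<longrightarrow> (\<forall>i<n. b i j = (if j = i then S else T)))"
    using S T w_nonneg by (intro defect_zero_iff) (auto simp: b_def)
  also have "\<dots> \<longleftrightarrow> (\<forall>j<n. s j \<noteq> s (n-1) \<longrightarrow> d j = S \<and> (\<forall>k<n. k \<noteq> j \<longrightarrow> f k j = T))"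
    using column w_zero by simp
  finally show ?thesis
    using nonincreasing_prefix_iff[OF sorted n, where P = "\<lambda>j. d j = S \<and> (\<forall>k<n. k \<noteq> j \<longrightarrow> f k j = T)"]
      prefix by (simp add: b_def)
qed

(* Hypothesis similar says Q = diag a * B * (diag a)^-1 for the matrix B with diagonal d and
   off-diagonal entries f, whose row sums are s. *)
theorem rho_ge_scaled_row_sum_bound:
  fixes Q :: "real mat" and a d s :: "nat \<Rightarrow> real" and f :: "nat \<Rightarrow> nat \<Rightarrow> real"
  assumes Q: "Q \<in> carrier_mat n n" and n: "0 < n"
    and Q_pos: "\<forall>i<n. \<forall>j<n. 0 < Q $$ (i,j)" and a_pos: "\<forall>i<n. 0 < a i"
    and similar: "\<And>i j. i < n \<Longrightarrow> j < n \<Longrightarrow> Q $$ (i,j) * a j = a i * (if i = j then d i else f i j)"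
    and rows: "\<And>i. i < n \<Longrightarrow> s i = (\<Sum>j<n. if i = j then d i else f i j)"
    and sorted: "\<And>i j. i \<le> j \<Longrightarrow> j < n \<Longrightarrow> s j \<le> s i"
    and S: "\<And>i. i < n \<Longrightarrow> S \<le> d i"
    and T: "\<And>i j. i < n \<Longrightarrow> j < n \<Longrightarrow> i \<noteq> j \<Longrightarrow> T \<le> f i j" and T_pos: "0 < T"
  defines "\<mu> \<equiv> (s (n-1) + S - T + sqrt ((s (n-1) - S + T)\<^sup>2 + 4 * T * (\<Sum>k<n-1. s k - s (n-1)))) / 2"
  shows "\<mu> \<le> rho Q"
    and "rho Q = \<mu> \<longleftrightarrow> (\<forall>k<n. s k = s 0) \<or>
           (\<exists>t. 2 \<le> t \<and> t \<le> n \<and> (\<forall>k<t-1. d k = S) \<and>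
              (\<forall>k<n. \<forall>l<t-1. k \<noteq> l \<longrightarrow> f k l = T) \<and>
              (\<forall>k. t-1 \<le> k \<and> k < n \<longrightarrow> s k = s (n-1)))" (is "_ \<longleftrightarrow> ?equality")
proof -
  define b where "b i j = (if i = j then d i else f i j)" for i j
  define w where "w j = (s j - s (n-1)) / (\<mu> - S + T)" for j
  have lower: "(if j = i then S else T) \<le> b i j" if "i < n" "j < n" for i j
    using S T that by (auto simp: b_def)
  have rows_b: "s i = (\<Sum>j<n. b i j)" if "i < n" for i using rows[OF that] by (simp add: b_def)
  note setting = n rows_b sorted lower T_pos meta_eq_to_obj_eq[OF \<mu>_def] w_def
  from setting have c: "0 < \<mu> - S + T" by (rule shifted_row_sums_defect(1))
  from setting have w_nonneg: "\<And>j. j < n \<Longrightarrow> 0 \<le> w j" by (rule shifted_row_sums_defect(2))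
  from setting have shifted: "\<And>i. i < n \<Longrightarrow> (\<Sum>j<n. b i j * (1 + w j))
           = \<mu> * (1 + w i) + (\<Sum>j<n. (b i j - (if j = i then S else T)) * w j)"
    by (rule shifted_row_sums_defect(3))
  define e where "e i = a i * (\<Sum>j<n. (b i j - (if j = i then S else T)) * w j)" for i
  have e_nonneg: "\<forall>i<n. 0 \<le> e i"
  proof (intro allI impI)
    fix i assume i: "i < n"
    have "0 \<le> (\<Sum>j<n. (b i j - (if j = i then S else T)) * w j)"
      using lower[OF i] w_nonneg by (intro sum_nonneg) simp
    then show "0 \<le> e i" unfolding e_def using a_pos i by (simp add: less_imp_le)
  qed
  have y_pos: "\<forall>i<n. 0 < a i * (1 + w i)" using a_pos w_nonneg by (simp add: add_pos_nonneg)
  have eq: "\<forall>i<n. (\<Sum>j<n. Q $$ (i,j) * (a j * (1 + w j))) = \<mu> * (a i * (1 + w i)) + e i"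
  proof (intro allI impI)
    fix i assume i: "i < n"
    have "(\<Sum>j<n. Q $$ (i,j) * (a j * (1 + w j))) = a i * (\<Sum>j<n. b i j * (1 + w j))"
      unfolding sum_distrib_left using similar i
      by (intro sum.cong) (simp_all add: b_def mult.assoc[symmetric])
    then show "(\<Sum>j<n. Q $$ (i,j) * (a j * (1 + w j))) = \<mu> * (a i * (1 + w i)) + e i"
      unfolding shifted[OF i] by (simp add: e_def algebra_simps)
  qed
  note radius = spectral_radius_eq_iff_defect_zero[OF Q n Q_pos y_pos e_nonneg eq, folded rho_def]
  show "\<mu> \<le> rho Q" by (rule radius(1))
  have "rho Q = \<mu> \<longleftrightarrow> (\<forall>i<n. (\<Sum>j<n. (b i j - (if j = i then S else T)) * w j) = 0)"
    using radius(2) a_pos by (simp add: e_def) (metis less_irrefl)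
  also have "\<dots> \<longleftrightarrow> ?equality"
    unfolding b_def using c w_nonneg by (intro defect_zero_iff_prefix[OF n sorted S T]) (simp_all add: w_def)
  finally show "rho Q = \<mu> \<longleftrightarrow> ?equality" .
qed

section \<open>The distance signless Laplacian\<close>

lemma gdist_self: "i < n \<Longrightarrow> gdist n E i i = 0"
  unfolding gdist_def is_walk_def by (intro Least_eq_0 exI[of _ "[i]"]) auto

lemma gdist_ge_1:
  assumes conn: "connected_graph n E" and ij: "i < n" "j < n" "i \<noteq> j"
  shows "1 \<le> gdist n E i j"
proof -
  obtain p where p: "is_walk n E p" "hd p = i" "last p = j"
    using conn ij unfolding connected_graph_def by blast
  then have "\<exists>k p. is_walk n E p \<and> hd p = i \<and> last p = j \<and> length p = Suc k"
    unfolding is_walk_def by (metis Suc_pred length_greater_0_conv)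
  from LeastI_ex[OF this] obtain q where q: "hd q = i" "last q = j"
    "length q = Suc (gdist n E i j)" unfolding gdist_def by blast
  show ?thesis
  proof (rule ccontr)
    assume "\<not> 1 \<le> gdist n E i j"
    then have "length q = 1" using q(3) by simp
    then obtain x where "q = [x]" by (cases q) auto
    with q ij show False by simp
  qed
qed

lemma transmission_pos:
  assumes conn: "connected_graph n E" and n: "2 \<le> n" and i: "i < n"
  shows "0 < transmission n E i"
proof -
  define j where "j = (if i = 0 then 1 else 0 :: nat)"
  have j: "j < n" "i \<noteq> j" using n by (auto simp: j_def)
  have "real (gdist n E i j) \<le> transmission n E i"
    unfolding transmission_def using j by (intro member_le_sum) auto
  with gdist_ge_1[OF conn i j] show ?thesis by linarith
qed

lemma DQ_mat_pos:
  assumes conn: "connected_graph n E" and n: "2 \<le> n" and ij: "i < n" "j < n"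
  shows "0 < DQ_mat n E $$ (i,j)"
  using transmission_pos[OF conn n ij(1)] gdist_ge_1[OF conn ij] ij
  by (cases "i = j") (auto simp: DQ_mat_def)

lemma DQ_mat_diagonal_similarity:
  assumes conn: "connected_graph n E" and n: "2 \<le> n" and ij: "i < n" "j < n"
  shows "DQ_mat n E $$ (i,j) * transmission n E j powr \<alpha> = transmission n E i powr \<alpha> *
           (if i = j then transmission n E i
            else real (gdist n E i j) * transmission n E j powr \<alpha> / transmission n E i powr \<alpha>)"
  using transmission_pos[OF conn n ij(1)] ij by (cases "i = j") (simp_all add: DQ_mat_def gdist_self)

lemma gen_avg_trans_plus_transmission:
  assumes i: "i < n"
  shows "gen_avg_trans n E \<alpha> i + transmission n E i =
           (\<Sum>j<n. if i = j then transmission n E i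
                   else real (gdist n E i j) * transmission n E j powr \<alpha> / transmission n E i powr \<alpha>)"
proof -
  have "(\<Sum>j<n. if i = j then transmission n E i
                else real (gdist n E i j) * transmission n E j powr \<alpha> / transmission n E i powr \<alpha>)
        = (\<Sum>j<n. real (gdist n E i j) * transmission n E j powr \<alpha> / transmission n E i powr \<alpha>
                  + (if i = j then transmission n E i else 0))"
    using gdist_self[OF i] by (intro sum.cong) auto
  also have "\<dots> = gen_avg_trans n E \<alpha> i + transmission n E i"
    using i by (simp add: sum.distrib gen_avg_trans_def sum_divide_distrib)
  finally show ?thesis ..
qed

lemma finite_offdiagonal_values:
  fixes g :: "nat \<Rightarrow> nat \<Rightarrow> 'a"
  shows "finite {g i j | i j. i < n \<and> j < n \<and> i \<noteq> j}"
proof (rule finite_subset)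
  show "{g i j | i j. i < n \<and> j < n \<and> i \<noteq> j} \<subseteq> (\<Union>i<n. (\<lambda>j. g i j) ` {..<n})"
    by auto
qed simp

lemma Min_offdiagonal_values_pos:
  fixes g :: "nat \<Rightarrow> nat \<Rightarrow> real"
  assumes n: "2 \<le> n" and pos: "\<And>i j. i < n \<Longrightarrow> j < n \<Longrightarrow> i \<noteq> j \<Longrightarrow> 0 < g i j"
  shows "0 < Min {g i j | i j. i < n \<and> j < n \<and> i \<noteq> j}"
proof -
  have "g 0 1 \<in> {g i j | i j. i < n \<and> j < n \<and> i \<noteq> j}"
    using n by (intro CollectI exI[of _ 0] exI[of _ 1]) simp
  then have "{g i j | i j. i < n \<and> j < n \<and> i \<noteq> j} \<noteq> {}" by blast
  with pos show ?thesis by (auto simp: Min_gr_iff finite_offdiagonal_values)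
qed

lemma scaled_distance_pos:
  assumes conn: "connected_graph n E" and n: "2 \<le> n" and ij: "i < n" "j < n" "i \<noteq> j"
  shows "0 < real (gdist n E i j) * transmission n E j powr \<alpha> / transmission n E i powr \<alpha>"
  using gdist_ge_1[OF conn ij] transmission_pos[OF conn n ij(1)] transmission_pos[OF conn n ij(2)]
  by (intro divide_pos_pos mult_pos_pos) auto

theorem theorem8:
  fixes n :: nat and E :: "nat \<Rightarrow> nat \<Rightarrow> bool" and \<alpha> :: real
    and s :: "nat \<Rightarrow> real" and S T :: real
  assumes graph: "simple_graph n E"
    and conn: "connected_graph n E"
    and n2: "n \<ge> 2"
    and s_def: "\<And>k. s k = gen_avg_trans n E \<alpha> k + transmission n E k"
    and sorted: "\<And>i j. i \<le> j \<Longrightarrow> j < n \<Longrightarrow> s j \<le> s i"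
    and S_def: "S = Min {transmission n E i | i. i < n}"
    and T_def: "T = Min {real (gdist n E i j) * transmission n E j powr \<alpha> / transmission n E i powr \<alpha>
                          | i j. i < n \<and> j < n \<and> i \<noteq> j}"
  shows "(rho (DQ_mat n E) \<ge>
           (s (n-1) + S - T + sqrt ((s (n-1) - S + T)\<^sup>2 + 4 * T * (\<Sum>k<n-1. s k - s (n-1)))) / 2) \<and>
         (rho (DQ_mat n E) =
           (s (n-1) + S - T + sqrt ((s (n-1) - S + T)\<^sup>2 + 4 * T * (\<Sum>k<n-1. s k - s (n-1)))) / 2
         \<longleftrightarrow> (\<forall>k<n. s k = s 0) \<or>
             (\<exists>t. 2 \<le> t \<and> t \<le> n \<and>
                (\<forall>k<t-1. transmission n E k = S) \<and>
                (\<forall>k<n. \<forall>l<t-1. k \<noteq> l \<longrightarrow>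
                    real (gdist n E k l) * transmission n E l powr \<alpha> / transmission n E k powr \<alpha> = T) \<and>
                (\<forall>k. t-1 \<le> k \<and> k < n \<longrightarrow> s k = s (n-1))))"
proof -
  let ?D = "transmission n E"
  let ?f = "\<lambda>i j. real (gdist n E i j) * ?D j powr \<alpha> / ?D i powr \<alpha>"
  have D_pos: "\<And>i. i < n \<Longrightarrow> 0 < ?D i" by (rule transmission_pos[OF conn n2])
  have S_le: "\<And>i. i < n \<Longrightarrow> S \<le> ?D i" unfolding S_def by (intro Min_le) auto
  have T_le: "\<And>i j. i < n \<Longrightarrow> j < n \<Longrightarrow> i \<noteq> j \<Longrightarrow> T \<le> ?f i j"
    unfolding T_def by (intro Min_le finite_offdiagonal_values) auto
  have T_pos: "0 < T"
    unfolding T_def using n2 by (rule Min_offdiagonal_values_pos) (rule scaled_distance_pos[OF conn n2])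
  have rows: "\<And>i. i < n \<Longrightarrow> s i = (\<Sum>j<n. if i = j then ?D i else ?f i j)"
    using s_def gen_avg_trans_plus_transmission by simp
  have n: "0 < n" using n2 by simp
  have DQ: "DQ_mat n E \<in> carrier_mat n n" by (simp add: DQ_mat_def)
  have a_pos: "\<forall>i<n. 0 < ?D i powr \<alpha>" using D_pos by (simp add: less_imp_neq[symmetric])
  show ?thesis
    using rho_ge_scaled_row_sum_bound[OF DQ n _ a_pos DQ_mat_diagonal_similarity[OF conn n2] rows
        sorted S_le T_le T_pos] DQ_mat_pos[OF conn n2] by simp
qed

end
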